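(* Let $\mathcal{E}=G_2([-1,1])$ be the set of the $256$ global maps of elementary cellular automata. Under the equivalence relation $\sim$ (generated by state permutation, reflection, shift and scaling, as defined in the context) restricted to $\mathcal{E}$, the set $\mathcal{E}$ splits into exactly $81$ equivalence classes.
   Context: For finite $M=\{j_1<\dots<j_m\}\subset\mathbb{Z}$ and $f:\{0,1\}^m\to\{0,1\}$, $\Phi^M_f(x)_i=f(x_{i+j_1}\dots x_{i+j_m})$ on $\{0,1\}^{\mathbb{Z}}$; $G_2([-1,1])=\{\Phi^{\{-1,0,1\}}_f\mid f:\{0,1\}^3\to\{0,1\}\}$. Operators on global maps: $\sigma\Phi=\sigma\circ\Phi$ with $(\sigma x)_i=x_{i+1}$; $\hat c\Phi(x)=c\Phi(cx)$ where $c$ swaps $0$ and $1$ in every cell; $\hat r\Phi(x)=r\Phi(rx)$ with $(rx)_i=x_{-i}$. $\Phi\cong\Psi$ iff $\Psi=\tau\Phi$ for some $\tau$ in the group generated by $\sigma,\hat r,\hat c$. Scaling: for a positive rational $v$ and a global map with a representation $\Phi=\Phi^M_f$ where $vM=\{vi\mid i\in M\}\subseteq\mathbb{Z}$, $\hat s_v\Phi=\Phi^{vM}_f$. $\Phi\sim\Psi$ iff there are global maps $\Phi',\Psi'$ and a positive rational $v$ with $\Phi\cong\Phi'$, $\Psi\cong\Psi'$ and $\Psi'=\hat s_v\Phi'$. *)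

theory Defs
  imports Complex_Main
begin

text \<open>Configurations in {0,1}^Z, with bool standing for {0,1} (False = 0, True = 1).\<close>
type_synonym cfg = "int \<Rightarrow> bool"
type_synonym gmap = "cfg \<Rightarrow> cfg"

definition Phi :: "int set \<Rightarrow> (bool list \<Rightarrow> bool) \<Rightarrow> gmap" where
  "Phi M f = (\<lambda>x i. f (map (\<lambda>j. x (i + j)) (sorted_list_of_set M)))"

definition is_rep :: "int set \<Rightarrow> (bool list \<Rightarrow> bool) \<Rightarrow> gmap \<Rightarrow> bool" where
  "is_rep M f \<Phi> \<longleftrightarrow> finite M \<and> \<Phi> = Phi M f"

definition ECA :: "gmap set" where
  "ECA = {Phi {-1, 0, 1} f | f. True}"

definition shift :: "cfg \<Rightarrow> cfg" where "shift x = (\<lambda>i. x (i + 1))"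
definition shift_inv :: "cfg \<Rightarrow> cfg" where "shift_inv x = (\<lambda>i. x (i - 1))"
definition cswap :: "cfg \<Rightarrow> cfg" where "cswap x = (\<lambda>i. \<not> x i)"
definition refl_cfg :: "cfg \<Rightarrow> cfg" where "refl_cfg x = (\<lambda>i. x (- i))"

definition op_sigma :: "gmap \<Rightarrow> gmap" where "op_sigma \<Phi> = shift \<circ> \<Phi>"
definition op_sigma_inv :: "gmap \<Rightarrow> gmap" where "op_sigma_inv \<Phi> = shift_inv \<circ> \<Phi>"
definition op_c :: "gmap \<Rightarrow> gmap" where "op_c \<Phi> = (\<lambda>x. cswap (\<Phi> (cswap x)))"
definition op_r :: "gmap \<Rightarrow> gmap" where "op_r \<Phi> = (\<lambda>x. refl_cfg (\<Phi> (refl_cfg x)))"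

text \<open>Phi \<cong> Psi iff Psi = tau Phi for tau in the group generated by sigma, r-hat, c-hat
  (r-hat and c-hat are involutions; sigma^{-1} is op_sigma_inv).\<close>
inductive sym_equiv :: "gmap \<Rightarrow> gmap \<Rightarrow> bool" where
  base: "sym_equiv \<Phi> \<Phi>"
| sigma: "sym_equiv \<Phi> \<Psi> \<Longrightarrow> sym_equiv \<Phi> (op_sigma \<Psi>)"
| sigma_inv: "sym_equiv \<Phi> \<Psi> \<Longrightarrow> sym_equiv \<Phi> (op_sigma_inv \<Psi>)"
| c: "sym_equiv \<Phi> \<Psi> \<Longrightarrow> sym_equiv \<Phi> (op_c \<Psi>)"
| r: "sym_equiv \<Phi> \<Psi> \<Longrightarrow> sym_equiv \<Phi> (op_r \<Psi>)"

text \<open>vM = {v*i | i in M} as a set of integers (meaningful when vM \<subseteq> Z).\<close>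
definition scale_set :: "rat \<Rightarrow> int set \<Rightarrow> int set" where
  "scale_set v M = {k. \<exists>j\<in>M. of_int k = v * of_int j}"

definition is_scaling :: "rat \<Rightarrow> gmap \<Rightarrow> gmap \<Rightarrow> bool" where
  "is_scaling v \<Phi> \<Psi> \<longleftrightarrow> 0 < v \<and>
     (\<exists>M f. is_rep M f \<Phi> \<and> (\<forall>j\<in>M. v * of_int j \<in> \<int>) \<and> \<Psi> = Phi (scale_set v M) f)"

definition sim :: "gmap \<Rightarrow> gmap \<Rightarrow> bool" where
  "sim \<Phi> \<Psi> \<longleftrightarrow> (\<exists>\<Phi>' \<Psi>' v. sym_equiv \<Phi> \<Phi>' \<and> sym_equiv \<Psi> \<Psi>' \<and> is_scaling v \<Phi>' \<Psi>')"

end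

theory Submission
  imports Defs
begin

(* Cell 0 of a global map with a finite window depends only on finitely many essential cells,
   and its reduced table (the values of the map on configurations carrying an arbitrary pattern
   on the essential cells, read in increasing order, and False elsewhere) is an invariant of the
   map, independent of the window used to represent it. A scaling Phi^M_f to Phi^{vM}_f keeps f
   and maps M monotonically, hence preserves the reduced table. Conversely, elementary rules with
   the same reduced table have equally many essential cells among three consecutive ones, and two
   such sets of cells are related by a shift and a positive rational scaling, so the rules are
   related by scaling. Since scaling commutes with the symmetries c and r, two elementary maps are
   similar iff the orbits of their rules under c and r have the same reduced tables, which is
   detected by the least code of these tables; it takes 81 values on the 256 elementary rules. *)

section \<open>Symmetries of maps with a window of width three\<close>

lemma sorted_list_of_set_image_strict_mono:
  fixes g :: "'a::linorder \<Rightarrow> 'b::linorder"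
  assumes "finite A" and "strict_mono_on A g"
  shows "sorted_list_of_set (g ` A) = map g (sorted_list_of_set A)"
proof -
  have "sorted_wrt (\<lambda>x y. g x < g y) (sorted_list_of_set A)"
    using assms by (intro sorted_wrt_mono_rel[OF _ strict_sorted_list_of_set])
      (auto simp: strict_mono_on_def)
  moreover have "card (g ` A) = card A"
    using assms by (simp add: card_image strict_mono_on_imp_inj_on)
  ultimately show ?thesis
    using assms by (subst sorted_list_of_set_unique[symmetric]) (auto simp: sorted_wrt_map)
qed

lemma sorted_list_of_set_uminus:
  fixes A :: "'a::linordered_ab_group_add set"
  assumes "finite A"
  shows "sorted_list_of_set (uminus ` A) = rev (map uminus (sorted_list_of_set A))"
proof -
  have "sorted_wrt (\<lambda>x y. - y < - x) (sorted_list_of_set A)"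
    by (intro sorted_wrt_mono_rel[OF _ strict_sorted_list_of_set]) auto
  moreover have "card (uminus ` A) = card A"
    by (simp add: card_image)
  ultimately show ?thesis
    using assms
    by (subst sorted_list_of_set_unique[symmetric]) (auto simp: sorted_wrt_map sorted_wrt_rev)
qed

definition rule_c :: "(bool list \<Rightarrow> bool) \<Rightarrow> bool list \<Rightarrow> bool" where
  "rule_c f l \<longleftrightarrow> \<not> f (map Not l)"

definition rule_r :: "(bool list \<Rightarrow> bool) \<Rightarrow> bool list \<Rightarrow> bool" where
  "rule_r f l = f (rev l)"

lemma rule_c_rule_c [simp]: "rule_c (rule_c f) = f"
  by (simp add: rule_c_def comp_def fun_eq_iff)

lemma rule_r_rule_r [simp]: "rule_r (rule_r f) = f"
  by (simp add: rule_r_def fun_eq_iff)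

lemma rule_r_rule_c: "rule_r (rule_c f) = rule_c (rule_r f)"
  by (simp add: rule_c_def rule_r_def rev_map fun_eq_iff)

lemma op_c_Phi: "op_c (Phi M f) = Phi M (rule_c f)"
  by (simp add: fun_eq_iff op_c_def cswap_def Phi_def rule_c_def comp_def)

lemma op_r_Phi:
  assumes "finite M"
  shows "op_r (Phi M f) = Phi (uminus ` M) (rule_r f)"
  by (simp add: fun_eq_iff op_r_def refl_cfg_def Phi_def rule_r_def
      sorted_list_of_set_uminus[OF assms] rev_map comp_def)

definition window :: "int \<Rightarrow> int set" where
  "window k = {k - 1, k, k + 1}"

lemma sorted_list_of_window: "sorted_list_of_set (window k) = [k - 1, k, k + 1]"
  by (simp add: window_def sorted_list_of_set_insert_remove)

lemma Phi_window: "Phi (window k) f x i = f [x (i + k - 1), x (i + k), x (i + k + 1)]"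
  by (simp add: Phi_def sorted_list_of_window algebra_simps)

lemma op_sigma_window: "op_sigma (Phi (window k) f) = Phi (window (k + 1)) f"
  by (simp add: fun_eq_iff op_sigma_def shift_def Phi_window algebra_simps)

lemma op_sigma_inv_window: "op_sigma_inv (Phi (window k) f) = Phi (window (k - 1)) f"
  by (simp add: fun_eq_iff op_sigma_inv_def shift_inv_def Phi_window algebra_simps)

lemma op_r_window: "op_r (Phi (window k) f) = Phi (window (- k)) (rule_r f)"
  by (simp add: fun_eq_iff op_r_def refl_cfg_def Phi_window rule_r_def algebra_simps)

definition rule_orbit :: "(bool list \<Rightarrow> bool) \<Rightarrow> (bool list \<Rightarrow> bool) list" where
  "rule_orbit f = [f, rule_c f, rule_r f, rule_c (rule_r f)]"

lemma rule_orbit_closed: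
  assumes "g \<in> set (rule_orbit f)"
  shows "rule_c g \<in> set (rule_orbit f)" and "rule_r g \<in> set (rule_orbit f)"
  using assms by (auto simp: rule_orbit_def rule_r_rule_c)

lemma set_rule_orbit_eq:
  assumes "g \<in> set (rule_orbit f)"
  shows "set (rule_orbit g) = set (rule_orbit f)"
  using assms by (auto simp: rule_orbit_def rule_r_rule_c)

lemma sym_equiv_windowD:
  assumes "sym_equiv (Phi (window k) f) \<Psi>"
  shows "\<exists>k' g. g \<in> set (rule_orbit f) \<and> \<Psi> = Phi (window k') g"
  using assms
proof (induction "Phi (window k) f" \<Psi> rule: sym_equiv.induct)
  case base
  have "f \<in> set (rule_orbit f)"
    by (simp add: rule_orbit_def)
  then show ?case by blast
next
  case (sigma \<Psi>)
  then show ?case by (metis op_sigma_window)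
next
  case (sigma_inv \<Psi>)
  then show ?case by (metis op_sigma_inv_window)
next
  case (c \<Psi>)
  then show ?case by (metis op_c_Phi rule_orbit_closed(1))
next
  case (r \<Psi>)
  then show ?case by (metis op_r_window rule_orbit_closed(2))
qed

lemma sym_equiv_shift_window:
  assumes "sym_equiv \<Phi> (Phi (window k) f)"
  shows "sym_equiv \<Phi> (Phi (window k') f)"
proof -
  have up: "sym_equiv \<Phi> (Phi (window (k + int d)) f)" for d
  proof (induction d)
    case (Suc d)
    from sym_equiv.sigma[OF this] show ?case
      by (simp add: op_sigma_window ac_simps)
  qed (simp add: assms)
  have down: "sym_equiv \<Phi> (Phi (window (k - int d)) f)" for d
  proof (induction d)
    case (Suc d)
    from sym_equiv.sigma_inv[OF this] show ?case
      by (simp add: op_sigma_inv_window algebra_simps)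
  qed (simp add: assms)
  show ?thesis
  proof (cases "k \<le> k'")
    case True
    then show ?thesis using up[of "nat (k' - k)"] by simp
  next
    case False
    then show ?thesis using down[of "nat (k - k')"] by simp
  qed
qed

lemma sym_equiv_windowI:
  assumes "g \<in> set (rule_orbit f)"
  shows "sym_equiv (Phi (window k) f) (Phi (window k') g)"
proof -
  let ?\<Phi> = "Phi (window k) f"
  have "sym_equiv ?\<Phi> (Phi (window k) f)"
    by (rule sym_equiv.base)
  moreover have "sym_equiv ?\<Phi> (Phi (window k) (rule_c f))"
    using sym_equiv.c[OF sym_equiv.base[of ?\<Phi>]] by (simp add: op_c_Phi)
  moreover have r: "sym_equiv ?\<Phi> (Phi (window (- k)) (rule_r f))"
    using sym_equiv.r[OF sym_equiv.base[of ?\<Phi>]] by (simp add: op_r_window)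
  moreover have "sym_equiv ?\<Phi> (Phi (window (- k)) (rule_c (rule_r f)))"
    using sym_equiv.c[OF r] by (simp add: op_c_Phi)
  ultimately show ?thesis
    using assms by (auto simp: rule_orbit_def intro: sym_equiv_shift_window)
qed

section \<open>Essential cells and reduced tables\<close>

definition place :: "'a list \<Rightarrow> bool list \<Rightarrow> 'a \<Rightarrow> bool" where
  "place js l j \<longleftrightarrow> (\<exists>p < length js. js ! p = j \<and> l ! p)"

lemma place_nth:
  assumes "distinct js" and "p < length js"
  shows "place js l (js ! p) = l ! p"
  using assms by (auto simp: place_def nth_eq_iff_index_eq)

lemma map_place:
  assumes "distinct js" and "length l = length js"
  shows "map (place js l) js = l"
  using assms by (intro nth_equalityI) (simp_all add: place_nth)

lemma place_map:
  assumes "distinct ps" and "p \<in> set ps"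
  shows "place ps (map h ps) p = h p"
  using assms by (auto simp: in_set_conv_nth place_nth)

lemma place_map_inj:
  assumes "inj_on g A" and "set ps \<subseteq> A" and "q \<in> A"
  shows "place (map g ps) l (g q) = place ps l q"
proof -
  have "g (ps ! p) = g q \<longleftrightarrow> ps ! p = q" if "p < length ps" for p
    using assms that by (meson inj_on_eq_iff nth_mem subsetD)
  then show ?thesis
    by (auto simp: place_def)
qed

lemma place_Nil [simp]: "\<not> place [] l j"
  by (simp add: place_def)

lemma place_Cons [simp]: "place (i # js) (b # l) j \<longleftrightarrow> i = j \<and> b \<or> place js l j"
  by (simp add: place_def Ex_less_Suc2)

lemma map_fun_upd_nth:
  assumes "distinct js" and "p < length js"
  shows "map (x(js ! p := v)) js = (map x js)[p := v]"
  using assms by (intro nth_equalityI) (auto simp: nth_list_update nth_eq_iff_index_eq)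

definition essential_cells :: "gmap \<Rightarrow> int set" where
  "essential_cells \<Phi> = {j. \<exists>x. \<Phi> (x(j := \<not> x j)) 0 \<noteq> \<Phi> x 0}"

definition reduced_table :: "gmap \<Rightarrow> bool list" where
  "reduced_table \<Phi> = map (\<lambda>l. \<Phi> (place (sorted_list_of_set (essential_cells \<Phi>)) l) 0)
     (List.n_lists (card (essential_cells \<Phi>)) [False, True])"

definition essential :: "nat \<Rightarrow> (bool list \<Rightarrow> bool) \<Rightarrow> nat \<Rightarrow> bool" where
  "essential n f p \<longleftrightarrow> (\<exists>l. length l = n \<and> f (l[p := \<not> l ! p]) \<noteq> f l)"

definition essential_positions :: "nat \<Rightarrow> (bool list \<Rightarrow> bool) \<Rightarrow> nat list" where
  "essential_positions n f = filter (essential n f) [0..<n]"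

definition reduced_rule :: "nat \<Rightarrow> (bool list \<Rightarrow> bool) \<Rightarrow> bool list \<Rightarrow> bool" where
  "reduced_rule n f l = f (map (place (essential_positions n f) l) [0..<n])"

definition rule_reduced_table :: "nat \<Rightarrow> (bool list \<Rightarrow> bool) \<Rightarrow> bool list" where
  "rule_reduced_table n f =
     map (reduced_rule n f) (List.n_lists (length (essential_positions n f)) [False, True])"

lemma set_essential_positions: "set (essential_positions n f) = {p. p < n \<and> essential n f p}"
  by (auto simp: essential_positions_def)

lemma sorted_essential_positions: "sorted_wrt (<) (essential_positions n f)"
  by (simp add: essential_positions_def sorted_wrt_filter)

lemma distinct_essential_positions: "distinct (essential_positions n f)"
  using sorted_essential_positions strict_sorted_iff by blast

lemma sorted_list_of_essential_positions:
  "sorted_list_of_set (set (essential_positions n f)) = essential_positions n f"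
  using sorted_essential_positions[of n f]
  by (simp add: strict_sorted_iff sorted_list_of_set.idem_if_sorted_distinct)

lemma length_rule_reduced_table:
  "length (rule_reduced_table n f) = 2 ^ length (essential_positions n f)"
  by (simp add: rule_reduced_table_def length_n_lists numeral_2_eq_2)

lemma rule_reduced_table_cong:
  assumes "\<And>l. length l = n \<Longrightarrow> f l = g l"
  shows "rule_reduced_table n f = rule_reduced_table n g"
proof -
  have "essential n f = essential n g"
    using assms by (auto simp: essential_def fun_eq_iff)
  then have "essential_positions n f = essential_positions n g"
    by (simp add: essential_positions_def)
  moreover from this have "reduced_rule n f = reduced_rule n g"
    using assms by (simp add: reduced_rule_def fun_eq_iff)
  ultimately show ?thesis
    by (simp add: rule_reduced_table_def)
qed

lemma essential_cells_of_reader: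
  assumes "distinct js" and \<Phi>: "\<And>x. \<Phi> x 0 = f (map x js)"
  shows "essential_cells \<Phi> = (!) js ` set (essential_positions (length js) f)"
proof (rule set_eqI, rule iffI)
  fix j assume "j \<in> essential_cells \<Phi>"
  then obtain x where x: "f (map (x(j := \<not> x j)) js) \<noteq> f (map x js)"
    by (auto simp: essential_cells_def \<Phi>)
  then have "j \<in> set js"
    by (metis map_fun_upd)
  then obtain p where p: "p < length js" "j = js ! p"
    by (auto simp: in_set_conv_nth)
  have "essential (length js) f p"
    unfolding essential_def
    using x p assms(1) map_fun_upd_nth[of js p x] by (intro exI[of _ "map x js"]) simp
  with p show "j \<in> (!) js ` set (essential_positions (length js) f)"
    by (simp add: set_essential_positions)
next
  fix j assume "j \<in> (!) js ` set (essential_positions (length js) f)"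
  then obtain p where p: "p < length js" "essential (length js) f p" "j = js ! p"
    by (auto simp: set_essential_positions)
  then obtain l where l: "length l = length js" "f (l[p := \<not> l ! p]) \<noteq> f l"
    by (auto simp: essential_def)
  let ?x = "place js l"
  have "map ?x js = l" and "?x j = l ! p"
    using assms(1) l p by (simp_all add: map_place place_nth)
  then have "\<Phi> (?x(j := \<not> ?x j)) 0 \<noteq> \<Phi> ?x 0"
    using l p assms(1) map_fun_upd_nth[of js p ?x] by (simp add: \<Phi>)
  then show "j \<in> essential_cells \<Phi>"
    by (auto simp: essential_cells_def)
qed

lemma reduced_table_of_reader:
  assumes sorted: "sorted_wrt (<) js" and \<Phi>: "\<And>x. \<Phi> x 0 = f (map x js)"
  shows "reduced_table \<Phi> = rule_reduced_table (length js) f"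
proof -
  define n where "n = length js"
  define ps where "ps = essential_positions n f"
  have distinct: "distinct js"
    using sorted by (simp add: strict_sorted_iff)
  have "strict_mono_on (set ps) ((!) js)"
    using sorted by (auto simp: strict_mono_on_def ps_def set_essential_positions n_def
        intro: sorted_wrt_nth_less)
  then have sorted_cells: "sorted_list_of_set (essential_cells \<Phi>) = map ((!) js) ps"
    using essential_cells_of_reader[where \<Phi> = \<Phi> and f = f, OF distinct \<Phi>]
    by (simp add: sorted_list_of_set_image_strict_mono ps_def n_def
        sorted_list_of_essential_positions)
  have card_cells: "card (essential_cells \<Phi>) = length ps"
    using arg_cong[OF sorted_cells, of length] by simp
  have inj: "inj_on ((!) js) {..<n}"
    using distinct by (simp add: inj_on_nth n_def)
  have "\<Phi> (place (map ((!) js) ps) l) 0 = reduced_rule n f l" for l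
  proof -
    have "map (place (map ((!) js) ps) l) js
        = map (\<lambda>q. place (map ((!) js) ps) l (js ! q)) [0..<n]"
      by (rule nth_equalityI) (simp_all add: n_def)
    also have "\<dots> = map (place ps l) [0..<n]"
      using inj by (intro map_cong refl place_map_inj) (auto simp: ps_def set_essential_positions)
    finally show ?thesis
      by (simp add: \<Phi> reduced_rule_def ps_def)
  qed
  then show ?thesis
    by (simp add: reduced_table_def rule_reduced_table_def sorted_cells card_cells ps_def n_def)
qed

lemma reduced_table_Phi:
  assumes "finite M"
  shows "reduced_table (Phi M f) = rule_reduced_table (card M) f"
  using assms
  by (subst reduced_table_of_reader[of "sorted_list_of_set M" _ f]) (simp_all add: Phi_def)

lemma reduced_table_window: "reduced_table (Phi (window k) f) = rule_reduced_table 3 f"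
  using reduced_table_Phi[of "window k" f] by (simp add: window_def numeral_3_eq_3)

lemma not_essential_update:
  assumes "\<not> essential n f p" and "length l = n"
  shows "f (l[p := b]) = f l"
proof (cases "b = l ! p")
  case False
  then have "b = (\<not> l ! p)" by auto
  with assms show ?thesis by (auto simp: essential_def)
qed simp

lemma rule_eq_if_eq_on_essential_positions:
  assumes "length l = n" and "length l' = n"
    and "\<And>p. p \<in> set (essential_positions n f) \<Longrightarrow> l ! p = l' ! p"
  shows "f l = f l'"
proof -
  define u where "u k = map (\<lambda>q. if q < k then l' ! q else l ! q) [0..<n]" for k
  have "f (u k) = f l" if "k \<le> n" for k
    using that
  proof (induction k)
    case 0
    have "u 0 = l"
      using assms(1) map_nth[of l] by (simp add: u_def)
    then show ?case by simp
  next
    case (Suc k)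
    have "u (Suc k) = (u k)[k := l' ! k]"
      using Suc.prems by (intro nth_equalityI) (auto simp: u_def nth_list_update)
    moreover have "f ((u k)[k := l' ! k]) = f (u k)"
    proof (cases "essential n f k")
      case True
      then have "u k ! k = l' ! k"
        using Suc.prems assms(3) by (simp add: u_def set_essential_positions)
      then show ?thesis
        using list_update_id[of "u k" k] by simp
    next
      case False
      then show ?thesis
        by (simp add: not_essential_update u_def)
    qed
    ultimately show ?case
      using Suc by simp
  qed
  moreover have "u n = l'"
    using assms(1,2) by (intro nth_equalityI) (simp_all add: u_def)
  ultimately show ?thesis
    by (metis order_refl)
qed

lemma Phi_cong:
  assumes "\<And>l. length l = card M \<Longrightarrow> f l = g l"
  shows "Phi M f = Phi M g"
  using assms by (simp add: Phi_def fun_eq_iff)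

lemma Phi_window_reduced:
  "Phi (window k) f =
     Phi ((\<lambda>p. k - 1 + int p) ` set (essential_positions 3 f)) (reduced_rule 3 f)"
proof (intro ext)
  fix x :: cfg and i :: int
  let ?ps = "essential_positions 3 f" and ?h = "\<lambda>p. x (i + (k - 1 + int p))"
  let ?window = "[x (i + k - 1), x (i + k), x (i + k + 1)]"
  have "strict_mono_on (set ?ps) (\<lambda>p. k - 1 + int p)"
    by (simp add: strict_mono_on_def)
  then have "sorted_list_of_set ((\<lambda>p. k - 1 + int p) ` set ?ps) = map (\<lambda>p. k - 1 + int p) ?ps"
    by (simp add: sorted_list_of_set_image_strict_mono sorted_list_of_essential_positions)
  then have "Phi ((\<lambda>p. k - 1 + int p) ` set ?ps) (reduced_rule 3 f) x i
      = f (map (place ?ps (map ?h ?ps)) [0..<3])"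
    by (simp add: Phi_def reduced_rule_def comp_def)
  also have "\<dots> = f ?window"
  proof (rule rule_eq_if_eq_on_essential_positions)
    fix p assume p: "p \<in> set ?ps"
    then have "p < 3"
      by (simp add: set_essential_positions)
    then have "?window ! p = ?h p"
      by (auto simp: less_Suc_eq numeral_3_eq_3 algebra_simps)
    with p \<open>p < 3\<close> show "map (place ?ps (map ?h ?ps)) [0..<3] ! p = ?window ! p"
      by (simp add: place_map distinct_essential_positions)
  qed simp_all
  finally show "Phi (window k) f x i = Phi ((\<lambda>p. k - 1 + int p) ` set ?ps) (reduced_rule 3 f) x i"
    by (simp add: Phi_window)
qed

section \<open>Scaling\<close>

lemma scale_set_eq_image:
  assumes "\<forall>j\<in>M. v * of_int j \<in> \<int>"
  shows "scale_set v M = (\<lambda>j. \<lfloor>v * of_int j\<rfloor>) ` M"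
  using assms by (force simp: scale_set_def Ints_def)

lemma card_scale_set:
  assumes "0 < v" and "\<forall>j\<in>M. v * of_int j \<in> \<int>"
  shows "card (scale_set v M) = card M"
proof -
  have "inj_on (\<lambda>j. \<lfloor>v * of_int j\<rfloor>) M"
  proof (rule inj_onI)
    fix i j assume "i \<in> M" "j \<in> M" "\<lfloor>v * of_int i\<rfloor> = \<lfloor>v * of_int j\<rfloor>"
    then have "v * of_int i = v * of_int j"
      using assms(2) by (metis Ints_cases floor_of_int)
    then show "i = j"
      using assms(1) by simp
  qed
  then show ?thesis
    using assms(2) by (simp add: scale_set_eq_image card_image)
qed

lemma scale_set_uminus: "scale_set v (uminus ` M) = uminus ` scale_set v M"
proof (rule set_eqI)
  fix k
  have "k \<in> scale_set v (uminus ` M) \<longleftrightarrow> - k \<in> scale_set v M"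
    by (auto simp: scale_set_def) (metis minus_minus of_int_minus mult_minus_right)+
  then show "k \<in> scale_set v (uminus ` M) \<longleftrightarrow> k \<in> uminus ` scale_set v M"
    by (metis image_iff minus_minus)
qed

lemma scale_set_empty: "scale_set v {} = {}"
  by (simp add: scale_set_def)

lemma scale_set_insert:
  "scale_set v (insert j M) =
     (if v * of_int j \<in> \<int> then insert \<lfloor>v * of_int j\<rfloor> (scale_set v M) else scale_set v M)"
  by (auto simp: scale_set_def Ints_def) (metis rangeI)+

lemma reduced_table_eq_if_scaling:
  assumes "is_scaling v \<Phi> \<Psi>"
  shows "reduced_table \<Phi> = reduced_table \<Psi>"
proof -
  obtain M f where "0 < v" and "finite M" and "\<Phi> = Phi M f"
    and I: "\<forall>j\<in>M. v * of_int j \<in> \<int>" and "\<Psi> = Phi (scale_set v M) f"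
    using assms by (auto simp: is_scaling_def is_rep_def)
  moreover have "finite (scale_set v M)"
    using \<open>finite M\<close> I by (simp add: scale_set_eq_image)
  ultimately show ?thesis
    by (simp add: reduced_table_Phi card_scale_set)
qed

lemma is_scaling_op_c:
  assumes "is_scaling v \<Phi> \<Psi>"
  shows "is_scaling v (op_c \<Phi>) (op_c \<Psi>)"
proof -
  obtain M f where "0 < v" "finite M" "\<Phi> = Phi M f"
    and "\<forall>j\<in>M. v * of_int j \<in> \<int>" and "\<Psi> = Phi (scale_set v M) f"
    using assms by (auto simp: is_scaling_def is_rep_def)
  then show ?thesis
    by (auto simp: is_scaling_def is_rep_def op_c_Phi intro!: exI[of _ M] exI[of _ "rule_c f"])
qed

lemma is_scaling_op_r:
  assumes "is_scaling v \<Phi> \<Psi>"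
  shows "is_scaling v (op_r \<Phi>) (op_r \<Psi>)"
proof -
  obtain M f where v: "0 < v" and fin: "finite M" and \<Phi>: "\<Phi> = Phi M f"
    and I: "\<forall>j\<in>M. v * of_int j \<in> \<int>" and \<Psi>: "\<Psi> = Phi (scale_set v M) f"
    using assms by (auto simp: is_scaling_def is_rep_def)
  have "finite (scale_set v M)"
    using fin I by (simp add: scale_set_eq_image)
  moreover have "\<forall>j\<in>uminus ` M. v * of_int j \<in> \<int>"
    using I by (auto intro: Ints_minus)
  ultimately show ?thesis
    using v fin by (auto simp: is_scaling_def is_rep_def \<Phi> \<Psi> op_r_Phi scale_set_uminus
        intro!: exI[of _ "uminus ` M"] exI[of _ "rule_r f"])
qed

lemma similar_subsets_of_window:
  fixes P Q :: "nat set"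
  assumes "P \<subseteq> {0, 1, 2}" and "Q \<subseteq> {0, 1, 2}" and "card P = card Q"
  obtains v k1 k2 where "0 < v" and "\<forall>j \<in> (\<lambda>p. k1 - 1 + int p) ` P. v * of_int j \<in> \<int>"
    and "scale_set v ((\<lambda>p. k1 - 1 + int p) ` P) = (\<lambda>p. k2 - 1 + int p) ` Q"
proof -
  (* Shift both sets to start at 0; only two-element sets need a ratio other than 1. *)
  let ?v = "if card P = 2 then of_nat (Max Q - Min Q) / of_nat (Max P - Min P) else (1::rat)"
  let ?k1 = "1 - int (Min P)" and ?k2 = "1 - int (Min Q)"
  have "P \<in> Pow {0, 1, 2}" "Q \<in> Pow {0, 1, 2}"
    using assms by auto
  then have "0 < ?v \<and> (\<forall>j \<in> (\<lambda>p. ?k1 - 1 + int p) ` P. ?v * of_int j \<in> \<int>)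
      \<and> scale_set ?v ((\<lambda>p. ?k1 - 1 + int p) ` P) = (\<lambda>p. ?k2 - 1 + int p) ` Q"
    using assms(3) by (simp add: Pow_insert insert_commute)
      (elim disjE; simp add: scale_set_insert scale_set_empty)
  with that show ?thesis
    by blast
qed

lemma scaling_if_equal_reduced_tables:
  assumes "rule_reduced_table 3 f = rule_reduced_table 3 g"
  obtains v k1 k2 where "is_scaling v (Phi (window k1) f) (Phi (window k2) g)"
proof -
  let ?ps = "essential_positions 3 f" and ?qs = "essential_positions 3 g"
  have same_length: "length ?ps = length ?qs"
    using arg_cong[OF assms, of length] by (simp add: length_rule_reduced_table)
  have same_rule: "reduced_rule 3 f l = reduced_rule 3 g l" if "length l = length ?ps" for l
    using assms that same_length by (auto simp: rule_reduced_table_def set_n_lists)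
  have "card (set ?ps) = card (set ?qs)"
    using same_length by (simp add: distinct_card distinct_essential_positions)
  moreover have "set ?ps \<subseteq> {0, 1, 2}" "set ?qs \<subseteq> {0, 1, 2}"
    by (auto simp: set_essential_positions)
  ultimately obtain v k1 k2 where v: "0 < v"
    and I: "\<forall>j \<in> (\<lambda>p. k1 - 1 + int p) ` set ?ps. v * of_int j \<in> \<int>"
    and S: "scale_set v ((\<lambda>p. k1 - 1 + int p) ` set ?ps) = (\<lambda>p. k2 - 1 + int p) ` set ?qs"
    using similar_subsets_of_window by metis
  define M where "M = (\<lambda>p. k1 - 1 + int p) ` set ?ps"
  have "card (scale_set v M) = length ?ps"
    using same_length
    by (simp add: M_def S card_image inj_on_def distinct_card distinct_essential_positions)
  have "Phi (window k2) g = Phi (scale_set v M) (reduced_rule 3 g)"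
    by (simp add: Phi_window_reduced M_def S)
  also have "\<dots> = Phi (scale_set v M) (reduced_rule 3 f)"
    using \<open>card (scale_set v M) = length ?ps\<close> by (intro Phi_cong) (simp add: same_rule)
  finally have "Phi (window k2) g = Phi (scale_set v M) (reduced_rule 3 f)" .
  moreover have "Phi (window k1) f = Phi M (reduced_rule 3 f)"
    by (simp add: Phi_window_reduced M_def)
  ultimately have "is_scaling v (Phi (window k1) f) (Phi (window k2) g)"
    unfolding is_scaling_def is_rep_def using v I by (auto simp: M_def intro!: exI[of _ M])
  with that show ?thesis .
qed

section \<open>Similarity classes of elementary maps\<close>

lemma sim_window_iff:
  "sim (Phi (window 0) f) (Phi (window 0) g) \<longleftrightarrow>
     (\<exists>f' \<in> set (rule_orbit f). \<exists>g' \<in> set (rule_orbit g).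
        rule_reduced_table 3 f' = rule_reduced_table 3 g')"
proof
  assume "sim (Phi (window 0) f) (Phi (window 0) g)"
  then obtain \<Phi>' \<Psi>' v where "sym_equiv (Phi (window 0) f) \<Phi>'" "sym_equiv (Phi (window 0) g) \<Psi>'"
    and S: "is_scaling v \<Phi>' \<Psi>'"
    by (auto simp: sim_def)
  then obtain k1 k2 f' g' where "f' \<in> set (rule_orbit f)" "g' \<in> set (rule_orbit g)"
    and "\<Phi>' = Phi (window k1) f'" "\<Psi>' = Phi (window k2) g'"
    by (metis sym_equiv_windowD)
  with reduced_table_eq_if_scaling[OF S]
  show "\<exists>f' \<in> set (rule_orbit f). \<exists>g' \<in> set (rule_orbit g).
      rule_reduced_table 3 f' = rule_reduced_table 3 g'"
    by (auto simp: reduced_table_window)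
next
  assume "\<exists>f' \<in> set (rule_orbit f). \<exists>g' \<in> set (rule_orbit g).
      rule_reduced_table 3 f' = rule_reduced_table 3 g'"
  then obtain f' g' v k1 k2 where "f' \<in> set (rule_orbit f)" "g' \<in> set (rule_orbit g)"
    and "is_scaling v (Phi (window k1) f') (Phi (window k2) g')"
    by (metis scaling_if_equal_reduced_tables)
  then show "sim (Phi (window 0) f) (Phi (window 0) g)"
    unfolding sim_def by (blast intro: sym_equiv_windowI)
qed

lemma reduced_tables_of_orbit_eq:
  assumes "rule_reduced_table 3 f = rule_reduced_table 3 g"
  shows "map (rule_reduced_table 3) (rule_orbit f) = map (rule_reduced_table 3) (rule_orbit g)"
proof -
  obtain v k1 k2 where S: "is_scaling v (Phi (window k1) f) (Phi (window k2) g)"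
    using assms by (rule scaling_if_equal_reduced_tables)
  have tables_eq: "rule_reduced_table 3 f' = rule_reduced_table 3 g'"
    if "is_scaling v (Phi (window j1) f') (Phi (window j2) g')" for j1 j2 f' g'
    using reduced_table_eq_if_scaling[OF that] by (simp add: reduced_table_window)
  have "is_scaling v (Phi (window k1) (rule_c f)) (Phi (window k2) (rule_c g))"
    using is_scaling_op_c[OF S] by (simp add: op_c_Phi)
  moreover have R: "is_scaling v (Phi (window (- k1)) (rule_r f)) (Phi (window (- k2)) (rule_r g))"
    using is_scaling_op_r[OF S] by (simp add: op_r_window)
  moreover have "is_scaling v (Phi (window (- k1)) (rule_c (rule_r f)))
      (Phi (window (- k2)) (rule_c (rule_r g)))"
    using is_scaling_op_c[OF R] by (simp add: op_c_Phi)
  ultimately show ?thesis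
    using assms by (simp add: rule_orbit_def tables_eq)
qed

(* The leading 1 records the length, which makes the code injective. *)
fun bits_code :: "bool list \<Rightarrow> nat" where
  "bits_code [] = 1"
| "bits_code (b # bs) = of_bool b + 2 * bits_code bs"

lemma bits_code_pos: "0 < bits_code bs"
  by (induction bs) auto

lemma bits_code_Cons_gt_1: "1 < bits_code (b # bs)"
  using bits_code_pos[of bs] by simp

lemma of_bool_plus_double_eq_iff:
  "of_bool a + 2 * (m::nat) = of_bool b + 2 * n \<longleftrightarrow> a = b \<and> m = n"
  by (cases a; cases b) (auto, presburger+)

lemma inj_bits_code: "inj bits_code"
proof (rule injI)
  fix bs cs :: "bool list"
  show "bits_code bs = bits_code cs \<Longrightarrow> bs = cs"
  proof (induction bs arbitrary: cs)
    case Nil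
    then show ?case
      by (metis bits_code.simps(1) bits_code_Cons_gt_1 less_irrefl neq_Nil_conv)
  next
    case (Cons b bs)
    then show ?case
      by (cases cs) (metis bits_code.simps(1) bits_code_Cons_gt_1 less_irrefl,
          simp add: of_bool_plus_double_eq_iff)
  qed
qed

definition class_code :: "(bool list \<Rightarrow> bool) \<Rightarrow> nat" where
  "class_code f = Min (set (map (bits_code \<circ> rule_reduced_table 3) (rule_orbit f)))"

lemma class_code_eq_Min_image:
  "class_code f = Min (bits_code ` rule_reduced_table 3 ` set (rule_orbit f))"
  by (simp add: class_code_def image_comp)

lemma class_code_attained:
  "\<exists>f' \<in> set (rule_orbit f). class_code f = bits_code (rule_reduced_table 3 f')"
proof -
  have "class_code f \<in> bits_code ` rule_reduced_table 3 ` set (rule_orbit f)"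
    unfolding class_code_eq_Min_image by (rule Min_in) (auto simp: rule_orbit_def)
  then show ?thesis
    by auto
qed

lemma sim_window_iff_class_code:
  "sim (Phi (window 0) f) (Phi (window 0) g) \<longleftrightarrow> class_code f = class_code g"
proof
  assume "sim (Phi (window 0) f) (Phi (window 0) g)"
  then obtain f' g' where f': "f' \<in> set (rule_orbit f)" and g': "g' \<in> set (rule_orbit g)"
    and "rule_reduced_table 3 f' = rule_reduced_table 3 g'"
    by (auto simp: sim_window_iff)
  then have "rule_reduced_table 3 ` set (rule_orbit f') = rule_reduced_table 3 ` set (rule_orbit g')"
    by (metis reduced_tables_of_orbit_eq set_map)
  then show "class_code f = class_code g"
    by (simp only: class_code_eq_Min_image set_rule_orbit_eq[OF f'] set_rule_orbit_eq[OF g'])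
next
  assume "class_code f = class_code g"
  moreover obtain f' where "f' \<in> set (rule_orbit f)"
    and "class_code f = bits_code (rule_reduced_table 3 f')"
    using class_code_attained by blast
  moreover obtain g' where "g' \<in> set (rule_orbit g)"
    and "class_code g = bits_code (rule_reduced_table 3 g')"
    using class_code_attained by blast
  ultimately show "sim (Phi (window 0) f) (Phi (window 0) g)"
    using inj_bits_code by (auto simp: sim_window_iff inj_eq)
qed

lemma rule_c_cong:
  assumes "\<And>l. length l = n \<Longrightarrow> f l = g l" and "length l = n"
  shows "rule_c f l = rule_c g l"
  using assms by (simp add: rule_c_def)

lemma rule_r_cong:
  assumes "\<And>l. length l = n \<Longrightarrow> f l = g l" and "length l = n"
  shows "rule_r f l = rule_r g l"
  using assms by (simp add: rule_r_def)

lemma class_code_cong: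
  assumes "\<And>l. length l = 3 \<Longrightarrow> f l = g l"
  shows "class_code f = class_code g"
proof -
  have r: "rule_r f l = rule_r g l" if "length l = 3" for l
    using assms that by (rule rule_r_cong)
  have c: "rule_c f l = rule_c g l" if "length l = 3" for l
    using assms that by (rule rule_c_cong)
  have cr: "rule_c (rule_r f) l = rule_c (rule_r g) l" if "length l = 3" for l
    using r that by (rule rule_c_cong)
  show ?thesis
    unfolding class_code_def rule_orbit_def
    using rule_reduced_table_cong[OF assms] rule_reduced_table_cong[OF c]
      rule_reduced_table_cong[OF r] rule_reduced_table_cong[OF cr]
    by simp
qed

section \<open>Counting the classes\<close>

lemma card_quotient_by_invariant:
  assumes "\<And>b b'. b \<in> B \<Longrightarrow> b' \<in> B \<Longrightarrow> R (e b) (e b') \<longleftrightarrow> \<kappa> b = \<kappa> b'"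
  shows "card (e ` B // {(x, y). x \<in> e ` B \<and> y \<in> e ` B \<and> R x y}) = card (\<kappa> ` B)"
proof -
  define Rel where "Rel = {(x, y). x \<in> e ` B \<and> y \<in> e ` B \<and> R x y}"
  define cls where "cls c = e ` {b \<in> B. \<kappa> b = c}" for c
  have "Rel `` {e b} = cls (\<kappa> b)" if "b \<in> B" for b
    using assms that by (auto simp: Rel_def cls_def)
  then have "e ` B // Rel = cls ` \<kappa> ` B"
    by (auto simp: quotient_def)
  moreover have "inj_on cls (\<kappa> ` B)"
  proof (rule inj_onI)
    fix c c' assume "c \<in> \<kappa> ` B" and "c' \<in> \<kappa> ` B" and same_class: "cls c = cls c'"
    then obtain b where b: "b \<in> B" "\<kappa> b = c"
      by blast
    then have "e b \<in> cls c'"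
      using same_class by (auto simp: cls_def)
    then obtain b' where "b' \<in> B" "\<kappa> b' = c'" "e b' = e b"
      by (auto simp: cls_def)
    then show "c = c'"
      using assms[of b b'] assms[of b b] b by auto
  qed
  ultimately show ?thesis
    by (simp add: Rel_def card_image)
qed

fun bin_value :: "bool list \<Rightarrow> nat" where
  "bin_value [] = 0"
| "bin_value (b # bs) = of_bool b + 2 * bin_value bs"

(* The first cell is the least significant bit, matching the order of List.n_lists. *)
definition table_rule :: "bool list \<Rightarrow> bool list \<Rightarrow> bool" where
  "table_rule tb l = tb ! bin_value l"

lemma length_3_cases:
  assumes "length l = 3"
  obtains a b c where "l = [a, b, c]"
  using assms by (auto simp: numeral_3_eq_3 length_Suc_conv)

lemma ex_list_length_3: "(\<exists>l. length l = 3 \<and> P l) \<longleftrightarrow> (\<exists>a b c. P [a, b, c])"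
  by (metis length_3_cases length_Cons list.size(3) numeral_3_eq_3)

lemma upt_3: "[0..<3] = [0, 1, 2::nat]"
  by (simp add: upt_rec)

lemma n_lists_numeral:
  "List.n_lists (numeral k) xs =
     concat (map (\<lambda>ys. map (\<lambda>y. y # ys) xs) (List.n_lists (pred_numeral k) xs))"
  by (simp add: numeral_eq_Suc)

lemma table_rule_values:
  assumes "length l = 3"
  shows "table_rule (map f (List.n_lists 3 [False, True])) l = f l"
proof -
  obtain a b c where "l = [a, b, c]"
    using assms by (rule length_3_cases)
  then show ?thesis
    by (cases a; cases b; cases c) (simp_all add: table_rule_def n_lists_numeral)
qed

lemma essential_table_rule:
  "essential 3 (table_rule [t0, t1, t2, t3, t4, t5, t6, t7]) 0 \<longleftrightarrow>
     t0 \<noteq> t1 \<or> t2 \<noteq> t3 \<or> t4 \<noteq> t5 \<or> t6 \<noteq> t7"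
  "essential 3 (table_rule [t0, t1, t2, t3, t4, t5, t6, t7]) 1 \<longleftrightarrow>
     t0 \<noteq> t2 \<or> t1 \<noteq> t3 \<or> t4 \<noteq> t6 \<or> t5 \<noteq> t7"
  "essential 3 (table_rule [t0, t1, t2, t3, t4, t5, t6, t7]) 2 \<longleftrightarrow>
     t0 \<noteq> t4 \<or> t1 \<noteq> t5 \<or> t2 \<noteq> t6 \<or> t3 \<noteq> t7"
  by (simp_all add: essential_def ex_list_length_3 table_rule_def ex_bool_eq) argo+

lemma rule_reduced_table_table_rule:
  "rule_reduced_table 3 (table_rule [t0, t1, t2, t3, t4, t5, t6, t7]) =
     (if t0 \<noteq> t4 \<or> t1 \<noteq> t5 \<or> t2 \<noteq> t6 \<or> t3 \<noteq> t7 then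
        if t0 \<noteq> t2 \<or> t1 \<noteq> t3 \<or> t4 \<noteq> t6 \<or> t5 \<noteq> t7 then
          if t0 \<noteq> t1 \<or> t2 \<noteq> t3 \<or> t4 \<noteq> t5 \<or> t6 \<noteq> t7 then [t0, t1, t2, t3, t4, t5, t6, t7]
          else [t0, t2, t4, t6]
        else if t0 \<noteq> t1 \<or> t2 \<noteq> t3 \<or> t4 \<noteq> t5 \<or> t6 \<noteq> t7 then [t0, t1, t4, t5] else [t0, t4]
      else if t0 \<noteq> t2 \<or> t1 \<noteq> t3 \<or> t4 \<noteq> t6 \<or> t5 \<noteq> t7 then
        if t0 \<noteq> t1 \<or> t2 \<noteq> t3 \<or> t4 \<noteq> t5 \<or> t6 \<noteq> t7 then [t0, t1, t2, t3] else [t0, t2]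
      else if t0 \<noteq> t1 \<or> t2 \<noteq> t3 \<or> t4 \<noteq> t5 \<or> t6 \<noteq> t7 then [t0, t1] else [t0])"
  (is "_ = (if ?e2 then if ?e1 then if ?e0 then _ else _ else if ?e0 then _ else _
            else if ?e1 then if ?e0 then _ else _ else if ?e0 then _ else _)")
proof -
  (* [simplified] turns the position 1 into Suc 0, the form in which simp meets it. *)
  have "essential_positions 3 (table_rule [t0, t1, t2, t3, t4, t5, t6, t7]) =
      (if ?e0 then [0] else []) @ (if ?e1 then [1] else []) @ (if ?e2 then [2] else [])"
    by (cases ?e0; cases ?e1; cases ?e2)
      (simp_all add: essential_positions_def upt_3 essential_table_rule[simplified])
  then show ?thesis
    unfolding rule_reduced_table_def reduced_rule_def
    by (cases ?e0; cases ?e1; cases ?e2) (simp_all add: table_rule_def upt_3 n_lists_numeral)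
qed

lemma rule_c_table_rule:
  "length l = 3 \<Longrightarrow> rule_c (table_rule [t0, t1, t2, t3, t4, t5, t6, t7]) l
     = table_rule [\<not> t7, \<not> t6, \<not> t5, \<not> t4, \<not> t3, \<not> t2, \<not> t1, \<not> t0] l"
  by (elim length_3_cases) (simp add: rule_c_def table_rule_def split: if_splits)

lemma rule_r_table_rule:
  "length l = 3 \<Longrightarrow> rule_r (table_rule [t0, t1, t2, t3, t4, t5, t6, t7]) l
     = table_rule [t0, t4, t2, t6, t1, t5, t3, t7] l"
  by (elim length_3_cases) (simp add: rule_r_def table_rule_def split: if_splits)

lemma class_code_table_rule:
  "class_code (table_rule [t0, t1, t2, t3, t4, t5, t6, t7]) =
     Min (set (map (bits_code \<circ> rule_reduced_table 3 \<circ> table_rule)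
       [[t0, t1, t2, t3, t4, t5, t6, t7], [\<not> t7, \<not> t6, \<not> t5, \<not> t4, \<not> t3, \<not> t2, \<not> t1, \<not> t0],
        [t0, t4, t2, t6, t1, t5, t3, t7], [\<not> t7, \<not> t3, \<not> t5, \<not> t1, \<not> t6, \<not> t2, \<not> t4, \<not> t0]]))"
proof -
  have cr: "rule_c (rule_r (table_rule [t0, t1, t2, t3, t4, t5, t6, t7])) l
      = table_rule [\<not> t7, \<not> t3, \<not> t5, \<not> t1, \<not> t6, \<not> t2, \<not> t4, \<not> t0] l" if "length l = 3" for l
    using rule_c_cong[OF rule_r_table_rule that] that by (simp add: rule_c_table_rule)
  show ?thesis
    unfolding class_code_def rule_orbit_def
    using rule_reduced_table_cong[OF rule_c_table_rule] rule_reduced_table_cong[OF rule_r_table_rule]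
      rule_reduced_table_cong[OF cr]
    by simp
qed

lemma range_class_code:
  "range class_code = set (map (class_code \<circ> table_rule) (List.n_lists 8 [False, True]))"
proof (intro equalityI subsetI)
  fix c assume "c \<in> range class_code"
  then obtain f where c: "c = class_code f"
    by blast
  let ?tb = "map f (List.n_lists 3 [False, True])"
  have "class_code f = class_code (table_rule ?tb)"
    by (rule class_code_cong) (simp add: table_rule_values)
  moreover have "?tb \<in> set (List.n_lists 8 [False, True])"
    by (simp add: set_n_lists length_n_lists numeral_2_eq_2[symmetric] UNIV_bool[symmetric])
  ultimately show "c \<in> set (map (class_code \<circ> table_rule) (List.n_lists 8 [False, True]))"
    using c by auto
qed auto

lemma n_lists_8:
  "List.n_lists 8 xs = List.n_lists (Suc (Suc (Suc (Suc (Suc (Suc (Suc (Suc 0)))))))) xs"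
  by (simp add: numeral_eq_Suc)

lemma card_class_codes:
  "card (set (map (class_code \<circ> table_rule) (List.n_lists 8 [False, True]))) = 81"
  unfolding card_set n_lists_8
  by (simp only: List.n_lists.simps list.map concat.simps append.simps)
    (simp add: class_code_table_rule rule_reduced_table_table_rule)

theorem mainTheorem12:
  shows "card (ECA // {(\<Phi>, \<Psi>). \<Phi> \<in> ECA \<and> \<Psi> \<in> ECA \<and> sim \<Phi> \<Psi>}) = 81"
proof -
  have ECA: "ECA = (\<lambda>f. Phi (window 0) f) ` UNIV"
    by (auto simp: ECA_def window_def)
  have "card (ECA // {(\<Phi>, \<Psi>). \<Phi> \<in> ECA \<and> \<Psi> \<in> ECA \<and> sim \<Phi> \<Psi>}) = card (range class_code)"
    unfolding ECA by (rule card_quotient_by_invariant) (rule sim_window_iff_class_code)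
  also have "\<dots> = 81"
    by (simp only: range_class_code card_class_codes)
  finally show ?thesis .
qed

end
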